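(* Let $n\ge 1$. Every optimal $n$-town $S$ is convex, i.e., every point of $\mathbb{Z}\times\mathbb{Z}$ lying in the convex hull of $S$ belongs to $S$.
   Context: An $n$-town is a set $S\subset\mathbb{Z}\times\mathbb{Z}$ of exactly $n$ distinct grid points. Its cost is $c(S)=\frac12\sum_{s\in S}\sum_{t\in S}\|s-t\|_1$ (sum of Manhattan distances over all unordered pairs). An $n$-town is optimal if its cost is minimum among all $n$-towns. *)

theory Defs
  imports "HOL-Analysis.Analysis"
begin

definition l1dist :: "int \<times> int \<Rightarrow> int \<times> int \<Rightarrow> int" where
  "l1dist s t = \<bar>fst s - fst t\<bar> + \<bar>snd s - snd t\<bar>"

definition is_town :: "nat \<Rightarrow> (int \<times> int) set \<Rightarrow> bool" where
  "is_town n S \<longleftrightarrow> finite S \<and> card S = n"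

text \<open>Cost: half the sum over all ordered pairs, i.e. the sum over unordered pairs.\<close>
definition town_cost :: "(int \<times> int) set \<Rightarrow> real" where
  "town_cost S = (1/2) * (\<Sum>s\<in>S. \<Sum>t\<in>S. real_of_int (l1dist s t))"

definition optimal_town :: "nat \<Rightarrow> (int \<times> int) set \<Rightarrow> bool" where
  "optimal_town n S \<longleftrightarrow> is_town n S \<and> (\<forall>T. is_town n T \<longrightarrow> town_cost S \<le> town_cost T)"

definition to_real2 :: "int \<times> int \<Rightarrow> real \<times> real" where
  "to_real2 p = (real_of_int (fst p), real_of_int (snd p))"

definition grid_convex :: "(int \<times> int) set \<Rightarrow> bool" where
  "grid_convex S \<longleftrightarrow> (\<forall>p. to_real2 p \<in> convex hull (to_real2 ` S) \<longrightarrow> p \<in> S)"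

end

theory Submission
  imports Defs
begin

text \<open>
  Suppose a grid point \<open>p \<notin> S\<close> lies in the convex hull of an optimal town \<open>S\<close>, and let
  \<open>q \<in> S\<close> maximise the total distance \<open>g(x) = \<Sum>t\<in>S. \<parallel>x - t\<parallel>\<^sub>1\<close> over \<open>S\<close>. Since \<open>g\<close> extends
  to a convex function on the plane, \<open>g(p) \<le> g(q)\<close>. Moving the inhabitant of \<open>q\<close> to \<open>p\<close>
  changes the cost by \<open>(g(p) - \<parallel>p - q\<parallel>\<^sub>1) - g(q) < 0\<close>, contradicting optimality.
\<close>

lemma convex_on_sum_functions:
  assumes "convex S" and "finite I" and "\<And>i. i \<in> I \<Longrightarrow> convex_on S (f i)"
  shows "convex_on S (\<lambda>x. \<Sum>i\<in>I. f i x)"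
  using assms(2,3) by (induction I rule: finite_induct) (auto simp: convex_on_const \<open>convex S\<close>)

lemma convex_on_l1_dist:
  "convex_on UNIV (\<lambda>x::real \<times> real. \<bar>fst x - fst c\<bar> + \<bar>snd x - snd c\<bar>)"
proof (rule convex_onI)
  fix t :: real and x y :: "real \<times> real"
  assume t: "0 < t" "t < 1"
  have comb: "\<bar>(1 - t) * a + t * b\<bar> \<le> (1 - t) * \<bar>a\<bar> + t * \<bar>b\<bar>" for a b :: real
    using abs_triangle_ineq[of "(1 - t) * a" "t * b"] t by (simp add: abs_mult)
  have "fst ((1 - t) *\<^sub>R x + t *\<^sub>R y) - fst c = (1 - t) * (fst x - fst c) + t * (fst y - fst c)"
    and "snd ((1 - t) *\<^sub>R x + t *\<^sub>R y) - snd c = (1 - t) * (snd x - snd c) + t * (snd y - snd c)"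
    by (simp_all add: algebra_simps)
  then show "\<bar>fst ((1 - t) *\<^sub>R x + t *\<^sub>R y) - fst c\<bar> + \<bar>snd ((1 - t) *\<^sub>R x + t *\<^sub>R y) - snd c\<bar>
      \<le> (1 - t) * (\<bar>fst x - fst c\<bar> + \<bar>snd x - snd c\<bar>) + t * (\<bar>fst y - fst c\<bar> + \<bar>snd y - snd c\<bar>)"
    using comb[of "fst x - fst c" "fst y - fst c"] comb[of "snd x - snd c" "snd y - snd c"]
    by (simp add: algebra_simps)
qed simp

lemma l1dist_sum_le_on_convex_hull:
  assumes "finite T" and "to_real2 p \<in> convex hull (to_real2 ` S)"
    and "\<And>s. s \<in> S \<Longrightarrow> (\<Sum>t\<in>T. l1dist s t) \<le> B"
  shows "(\<Sum>t\<in>T. l1dist p t) \<le> B"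
proof -
  define F where
    "F x = (\<Sum>t\<in>T. \<bar>fst x - fst (to_real2 t)\<bar> + \<bar>snd x - snd (to_real2 t)\<bar>)" for x
  have F_grid: "F (to_real2 x) = of_int (\<Sum>t\<in>T. l1dist x t)" for x
    by (simp add: F_def to_real2_def l1dist_def)
  have "convex_on UNIV F"
    unfolding F_def using \<open>finite T\<close> convex_on_l1_dist by (intro convex_on_sum_functions) auto
  then have "convex_on (convex hull (to_real2 ` S)) F"
    by (rule convex_on_subset) (simp_all add: convex_convex_hull)
  moreover have "\<forall>x\<in>to_real2 ` S. F x \<le> of_int B"
    using assms(3) by (auto simp: F_grid simp del: of_int_sum)
  ultimately have "F (to_real2 p) \<le> of_int B"
    using convex_on_convex_hull_bound assms(2) by blast
  then show ?thesis
    by (simp add: F_grid del: of_int_sum)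
qed

lemma town_cost_insert:
  assumes "finite A" and "x \<notin> A"
  shows "town_cost (insert x A) = town_cost A + (\<Sum>t\<in>A. real_of_int (l1dist x t))"
proof -
  have sym: "l1dist s x = l1dist x s" for s
    by (simp add: l1dist_def abs_minus_commute)
  have "(\<Sum>s\<in>insert x A. \<Sum>t\<in>insert x A. real_of_int (l1dist s t))
      = (\<Sum>t\<in>A. real_of_int (l1dist x t))
        + (\<Sum>s\<in>A. real_of_int (l1dist s x) + (\<Sum>t\<in>A. real_of_int (l1dist s t)))"
    using assms by (simp add: l1dist_def)
  also have "\<dots> = (\<Sum>s\<in>A. \<Sum>t\<in>A. real_of_int (l1dist s t)) + 2 * (\<Sum>t\<in>A. real_of_int (l1dist x t))"
    by (simp add: sum.distrib sym)
  finally show ?thesis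
    by (simp add: town_cost_def)
qed

theorem lemma2:
  fixes n :: nat and S :: "(int \<times> int) set"
  assumes "n \<ge> 1" and "optimal_town n S"
  shows "grid_convex S"
  unfolding grid_convex_def
proof (intro allI impI, rule ccontr)
  fix p assume p_hull: "to_real2 p \<in> convex hull (to_real2 ` S)" and "p \<notin> S"
  have "finite S" and "card S = n" and opt: "\<And>T. is_town n T \<Longrightarrow> town_cost S \<le> town_cost T"
    using assms(2) by (auto simp: optimal_town_def is_town_def)
  define g where "g x = (\<Sum>t\<in>S. l1dist x t)" for x
  have "S \<noteq> {}" using \<open>card S = n\<close> assms(1) by auto
  then have "Max (g ` S) \<in> g ` S"
    using \<open>finite S\<close> by simp
  then obtain q where "q \<in> S" and "g q = Max (g ` S)"
    by auto
  then have q_max: "\<And>s. s \<in> S \<Longrightarrow> g s \<le> g q"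
    using \<open>finite S\<close> by simp
  have "g p \<le> g q"
    using l1dist_sum_le_on_convex_hull[OF \<open>finite S\<close> p_hull] q_max by (simp add: g_def)
  define A where "A = S - {q}"
  have "finite A" "p \<notin> A" "q \<notin> A" and S_eq: "S = insert q A"
    using \<open>finite S\<close> \<open>p \<notin> S\<close> \<open>q \<in> S\<close> by (auto simp: A_def)
  have "g p = l1dist p q + (\<Sum>t\<in>A. l1dist p t)" and "g q = (\<Sum>t\<in>A. l1dist q t)"
    using \<open>finite A\<close> \<open>q \<notin> A\<close> by (simp_all add: g_def S_eq l1dist_def)
  moreover have "l1dist p q > 0"
    using \<open>p \<notin> S\<close> \<open>q \<in> S\<close> by (cases "p = q") (auto simp: l1dist_def prod_eq_iff)
  ultimately have "(\<Sum>t\<in>A. l1dist p t) < (\<Sum>t\<in>A. l1dist q t)"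
    using \<open>g p \<le> g q\<close> by linarith
  then have "town_cost (insert p A) < town_cost S"
    unfolding S_eq town_cost_insert[OF \<open>finite A\<close> \<open>p \<notin> A\<close>] town_cost_insert[OF \<open>finite A\<close> \<open>q \<notin> A\<close>]
    by (simp flip: of_int_sum)
  moreover have "is_town n (insert p A)"
    using \<open>finite A\<close> \<open>p \<notin> A\<close> \<open>q \<notin> A\<close> \<open>card S = n\<close> S_eq by (simp add: is_town_def)
  ultimately show False
    using opt by fastforce
qed

end
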